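(* For all connected graphs $G_1$ and $G_2$, $$\operatorname{tw}(G_1\times G_2)\leq \tau(G_1)(\operatorname{tw}(G_2)+1)(\Delta(G_2)+1)\quad\text{and}\quad \operatorname{pw}(G_1\times G_2)\leq \tau(G_1)(\operatorname{pw}(G_2)+1)(\Delta(G_2)+1).$$
   Context: $\operatorname{tw}$ and $\operatorname{pw}$ denote treewidth and pathwidth; $\Delta$ denotes maximum degree. The vertex cover number $\tau(G)$ is the minimum size of a set $A\subseteq V(G)$ such that $V(G)\setminus A$ is an independent set. The direct product $G_1 \times G_2$ has vertex set $V(G_1)\times V(G_2)$, with $(a,v)(b,u)$ an edge iff $ab\in E(G_1)$ and $uv\in E(G_2)$. *)

theory Defs
  imports Main
begin

definition graph :: "'a set \<Rightarrow> ('a \<times> 'a) set \<Rightarrow> bool" where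
  "graph V E \<longleftrightarrow> finite V \<and> E \<subseteq> V \<times> V \<and> sym E \<and> irrefl E"

definition connected :: "'a set \<Rightarrow> ('a \<times> 'a) set \<Rightarrow> bool" where
  "connected V E \<longleftrightarrow> V \<noteq> {} \<and> (\<forall>u\<in>V. \<forall>v\<in>V. (u, v) \<in> (E \<inter> (V \<times> V))\<^sup>*)"

definition is_cycle :: "('a \<times> 'a) set \<Rightarrow> 'a list \<Rightarrow> bool" where
  "is_cycle E xs \<longleftrightarrow> length xs \<ge> 3 \<and> distinct xs \<and>
     (\<forall>i. i + 1 < length xs \<longrightarrow> (xs ! i, xs ! (i + 1)) \<in> E) \<and> (last xs, hd xs) \<in> E"

definition is_tree :: "'a set \<Rightarrow> ('a \<times> 'a) set \<Rightarrow> bool" where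
  "is_tree V E \<longleftrightarrow> graph V E \<and> connected V E \<and> \<not> (\<exists>xs. set xs \<subseteq> V \<and> is_cycle E xs)"

definition tree_decomp ::
  "'a set \<Rightarrow> ('a \<times> 'a) set \<Rightarrow> nat set \<Rightarrow> (nat \<times> nat) set \<Rightarrow> (nat \<Rightarrow> 'a set) \<Rightarrow> bool" where
  "tree_decomp V E I F B \<longleftrightarrow> is_tree I F \<and> (\<forall>i\<in>I. B i \<subseteq> V) \<and>
     (\<forall>v\<in>V. \<exists>i\<in>I. v \<in> B i) \<and>
     (\<forall>(u, v)\<in>E. \<exists>i\<in>I. u \<in> B i \<and> v \<in> B i) \<and>
     (\<forall>v\<in>V. connected {i\<in>I. v \<in> B i} (F \<inter> ({i\<in>I. v \<in> B i} \<times> {i\<in>I. v \<in> B i})))"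

definition treewidth :: "'a set \<Rightarrow> ('a \<times> 'a) set \<Rightarrow> nat" where
  "treewidth V E = (LEAST k. \<exists>I F B. tree_decomp V E I F B \<and> k = Max (card ` B ` I) - 1)"

definition path_decomp :: "'a set \<Rightarrow> ('a \<times> 'a) set \<Rightarrow> 'a set list \<Rightarrow> bool" where
  "path_decomp V E Bs \<longleftrightarrow> Bs \<noteq> [] \<and> (\<forall>b\<in>set Bs. b \<subseteq> V) \<and>
     (\<forall>v\<in>V. \<exists>b\<in>set Bs. v \<in> b) \<and>
     (\<forall>(u, v)\<in>E. \<exists>b\<in>set Bs. u \<in> b \<and> v \<in> b) \<and>
     (\<forall>v i j k. i \<le> j \<and> j \<le> k \<and> k < length Bs \<and> v \<in> Bs ! i \<and> v \<in> Bs ! k \<longrightarrow> v \<in> Bs ! j)"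

definition pathwidth :: "'a set \<Rightarrow> ('a \<times> 'a) set \<Rightarrow> nat" where
  "pathwidth V E = (LEAST k. \<exists>Bs. path_decomp V E Bs \<and> k = Max (card ` set Bs) - 1)"

definition vertex_cover_number :: "'a set \<Rightarrow> ('a \<times> 'a) set \<Rightarrow> nat" where
  "vertex_cover_number V E = (LEAST k. \<exists>A. A \<subseteq> V \<and> card A = k \<and>
      (\<forall>u\<in>V - A. \<forall>v\<in>V - A. (u, v) \<notin> E))"

definition max_degree :: "'a set \<Rightarrow> ('a \<times> 'a) set \<Rightarrow> nat" where
  "max_degree V E = Max ((\<lambda>v. card {u\<in>V. (v, u) \<in> E}) ` V)"

definition direct_prod_edges ::
  "('a \<times> 'a) set \<Rightarrow> ('b \<times> 'b) set \<Rightarrow> (('a \<times> 'b) \<times> ('a \<times> 'b)) set" where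
  "direct_prod_edges E1 E2 = {((a, v), (b, u)). (a, b) \<in> E1 \<and> (v, u) \<in> E2}"

end

theory Submission
  imports Defs
begin

text \<open>Fix a minimum vertex cover A of G1 and a tree or path decomposition of G2 of width k.
  Replacing every bag X by A \<times> N[X], with N[X] the closed neighbourhood of X, gives bags of at
  most |A|(k + 1)(\<Delta> + 1) vertices. Every remaining vertex (a, w) with a \<notin> A gets a private
  bag A \<times> N[X] \<union> {(a, w)} for some bag X containing w, attached as a leaf next to X (inserted
  right after X in the path case). As V1 - A is independent, every edge of G1 \<times> G2 has an end
  (b, u) with b \<in> A: it lies in the private bag of its other end, or, if both ends are in
  A \<times> V2, in A \<times> N[X] for a bag X containing both projections. The bags containing (a, w) with
  a \<in> A are those X with w \<in> N[X]: the union of the subtrees of w and of its neighbours,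
  each of which meets the subtree of w, hence connected.\<close>

lemma connected_restrict: "connected X (R \<inter> X \<times> X) \<longleftrightarrow> connected X R"
  unfolding connected_def by (simp add: Int_absorb2 Int_assoc)

lemma connected_mono: "connected X R \<Longrightarrow> R \<subseteq> R' \<Longrightarrow> connected X R'"
  unfolding connected_def by (meson Int_mono order_refl rtrancl_mono subsetD)

lemma connected_singleton: "connected {x} R"
  unfolding connected_def by simp

lemma connected_pair: "(s, t) \<in> R \<Longrightarrow> (t, s) \<in> R \<Longrightarrow> connected {s, t} R"
  unfolding connected_def by auto

lemma connected_Union:
  assumes C: "connected C R"
    and T: "\<And>y. y \<in> Y \<Longrightarrow> connected (T y) R \<and> T y \<inter> C \<noteq> {}"
  shows "connected (C \<union> (\<Union>y\<in>Y. T y)) R"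
proof -
  let ?U = "C \<union> (\<Union>y\<in>Y. T y)"
  let ?R = "(R \<inter> ?U \<times> ?U)\<^sup>*"
  have within: "(u, v) \<in> ?R" if "connected X R" "X \<subseteq> ?U" "u \<in> X" "v \<in> X" for X u v
    using that unfolding connected_def by (meson Int_mono order_refl rtrancl_mono subsetD Sigma_mono)
  obtain c where c: "c \<in> C" using C unfolding connected_def by auto
  have to_c: "(u, c) \<in> ?R \<and> (c, u) \<in> ?R" if u: "u \<in> ?U" for u
  proof (cases "u \<in> C")
    case True
    then show ?thesis using within[OF C] c by blast
  next
    case False
    then obtain y where y: "y \<in> Y" "u \<in> T y" using u by auto
    then obtain z where z: "z \<in> T y" "z \<in> C" using T by blast
    have "T y \<subseteq> ?U" using y by auto
    then have "(u, z) \<in> ?R" "(z, u) \<in> ?R" using within T y z by blast+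
    moreover have "(z, c) \<in> ?R" "(c, z) \<in> ?R" using within[OF C] z c by blast+
    ultimately show ?thesis by (meson rtrancl_trans)
  qed
  show ?thesis
    unfolding connected_def using c to_c by (blast intro: rtrancl_trans)
qed

lemma connected_add_leaves:
  assumes "connected J F"
  shows "connected (J \<union> {s\<in>S. p s \<in> J}) (F \<union> (\<lambda>s. (s, p s)) ` S \<union> (\<lambda>s. (p s, s)) ` S)"
proof -
  have "connected (J \<union> (\<Union>s\<in>{s\<in>S. p s \<in> J}. {s, p s})) (F \<union> (\<lambda>s. (s, p s)) ` S \<union> (\<lambda>s. (p s, s)) ` S)"
  proof (rule connected_Union)
    show "connected J (F \<union> (\<lambda>s. (s, p s)) ` S \<union> (\<lambda>s. (p s, s)) ` S)"
      by (rule connected_mono[OF assms]) blast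
  qed (auto intro: connected_pair)
  moreover have "J \<union> (\<Union>s\<in>{s\<in>S. p s \<in> J}. {s, p s}) = J \<union> {s\<in>S. p s \<in> J}" by auto
  ultimately show ?thesis by simp
qed

lemma is_cycle_step:
  assumes "is_cycle E xs" "k < length xs"
  shows "(xs ! k, xs ! (if Suc k = length xs then 0 else Suc k)) \<in> E"
proof (cases "Suc k = length xs")
  case True
  then have "xs ! k = last xs" "xs ! 0 = hd xs"
    by (metis diff_Suc_1 last_conv_nth list.size(3) nat.distinct(1), metis hd_conv_nth list.size(3) nat.distinct(1))
  then show ?thesis using assms(1) True unfolding is_cycle_def by simp
next
  case False
  then show ?thesis using assms unfolding is_cycle_def by simp
qed

lemma is_cycle_pendant:
  assumes cyc: "is_cycle E xs"
    and out: "\<And>z. (x, z) \<in> E \<Longrightarrow> z = y" and into: "\<And>z. (z, x) \<in> E \<Longrightarrow> z = y"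
  shows "x \<notin> set xs"
proof
  assume "x \<in> set xs"
  then obtain k where k: "k < length xs" "xs ! k = x" by (auto simp: in_set_conv_nth)
  define n where "n = length xs"
  have n: "3 \<le> n" using cyc unfolding is_cycle_def n_def by simp
  define next_k where "next_k = (if Suc k = n then 0 else Suc k)"
  define prev_k where "prev_k = (if k = 0 then n - 1 else k - 1)"
  have prev: "prev_k < n" "(if Suc prev_k = n then 0 else Suc prev_k) = k"
    using k(1) n unfolding prev_k_def n_def by auto
  have "xs ! next_k = y" using out is_cycle_step[OF cyc k(1)] k(2) unfolding next_k_def n_def by simp
  moreover have "xs ! prev_k = y" using into is_cycle_step[OF cyc prev(1)[unfolded n_def]] prev(2) k(2)
    unfolding n_def by simp
  moreover have "next_k \<noteq> prev_k" "next_k < n" using k(1) n unfolding next_k_def prev_k_def n_def by auto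
  moreover have "distinct xs" using cyc unfolding is_cycle_def by simp
  ultimately show False using prev(1) nth_eq_iff_index_eq unfolding n_def by metis
qed

lemma is_cycle_mono:
  assumes cyc: "is_cycle E xs" and X: "set xs \<subseteq> X" and E: "E \<inter> X \<times> X \<subseteq> E'"
  shows "is_cycle E' xs"
proof -
  have "xs \<noteq> []" using cyc unfolding is_cycle_def by auto
  then have "hd xs \<in> X" "last xs \<in> X" using X by auto
  moreover have "xs ! i \<in> X" if "i < length xs" for i using X that by auto
  ultimately show ?thesis using cyc E unfolding is_cycle_def by (auto 0 4)
qed

lemma is_tree_add_leaves:
  assumes tree: "is_tree I F" and S: "finite S" "S \<inter> I = {}" "p ` S \<subseteq> I"
  shows "is_tree (I \<union> S) (F \<union> (\<lambda>s. (s, p s)) ` S \<union> (\<lambda>s. (p s, s)) ` S)"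
    (is "is_tree ?I' ?F'")
proof -
  have F: "finite I" "F \<subseteq> I \<times> I" "sym F" "irrefl F" "connected I F"
    and acyclic: "\<not> (\<exists>xs. set xs \<subseteq> I \<and> is_cycle F xs)"
    using tree unfolding is_tree_def graph_def by auto
  have leaf: "p s \<in> I \<and> s \<notin> I" if "s \<in> S" for s using that S(2,3) by blast
  have graph: "graph ?I' ?F'"
    unfolding graph_def
  proof (intro conjI)
    show "irrefl ?F'" using F(4) leaf unfolding irrefl_def by fastforce
    show "sym ?F'" using F(3) unfolding sym_def by auto
  qed (use F S in auto)
  have "connected (I \<union> {s\<in>S. p s \<in> I}) ?F'" using connected_add_leaves[OF F(5)] .
  moreover have "I \<union> {s\<in>S. p s \<in> I} = ?I'" using leaf by auto
  ultimately have conn: "connected ?I' ?F'" by simp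
  have "\<not> is_cycle ?F' xs" if "set xs \<subseteq> ?I'" for xs
  proof
    assume cyc: "is_cycle ?F' xs"
    have "s \<notin> set xs" if "s \<in> S" for s
      by (rule is_cycle_pendant[OF cyc, of s "p s"]) (use that F(2) leaf in auto)
    then have "set xs \<subseteq> I" using \<open>set xs \<subseteq> ?I'\<close> by blast
    moreover have "?F' \<inter> I \<times> I \<subseteq> F" using leaf by auto
    ultimately show False using is_cycle_mono[OF cyc] acyclic by blast
  qed
  with graph conn show ?thesis unfolding is_tree_def by blast
qed

definition closed_nbhd :: "'b set \<Rightarrow> ('b \<times> 'b) set \<Rightarrow> 'b set \<Rightarrow> 'b set" where
  "closed_nbhd V E X = {u\<in>V. \<exists>y\<in>X. y = u \<or> (y, u) \<in> E}"

lemma card_closed_nbhd_le: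
  assumes "graph V E" "X \<subseteq> V"
  shows "card (closed_nbhd V E X) \<le> card X * (max_degree V E + 1)"
proof -
  have fV: "finite V" using assms(1) by (simp add: graph_def)
  then have fX: "finite X" using assms(2) finite_subset by blast
  have "card (closed_nbhd V E X) \<le> card (\<Union>y\<in>X. insert y {u\<in>V. (y, u) \<in> E})"
    by (rule card_mono) (use fX fV in \<open>auto simp: closed_nbhd_def\<close>)
  also have "\<dots> \<le> (\<Sum>y\<in>X. card (insert y {u\<in>V. (y, u) \<in> E}))"
    by (rule card_UN_le[OF fX])
  also have "\<dots> \<le> (\<Sum>y\<in>X. max_degree V E + 1)"
  proof (rule sum_mono)
    fix y assume "y \<in> X"
    then have "card {u\<in>V. (y, u) \<in> E} \<le> max_degree V E"
      unfolding max_degree_def using fV assms(2) by (intro Max_ge) auto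
    then show "card (insert y {u\<in>V. (y, u) \<in> E}) \<le> max_degree V E + 1"
      using fV by (simp add: card_insert_if)
  qed
  finally show ?thesis by simp
qed

lemma tree_decomp_closed_nbhd_connected:
  assumes td: "tree_decomp V E I F B" and E: "E \<subseteq> V \<times> V" and w: "w \<in> V"
  shows "connected {i\<in>I. w \<in> closed_nbhd V E (B i)} F"
proof -
  have bags_connected: "connected {i\<in>I. v \<in> B i} F" if "v \<in> V" for v
    using td that unfolding tree_decomp_def by (simp add: connected_restrict)
  have "connected ({i\<in>I. w \<in> B i} \<union> (\<Union>y\<in>{y. (y, w) \<in> E}. {i\<in>I. y \<in> B i})) F"
  proof (rule connected_Union)
    fix y assume "y \<in> {y. (y, w) \<in> E}"
    then have "(y, w) \<in> E" by simp
    moreover from this obtain i where "i \<in> I" "y \<in> B i" "w \<in> B i"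
      using td unfolding tree_decomp_def by blast
    ultimately show "connected {i\<in>I. y \<in> B i} F \<and> {i\<in>I. y \<in> B i} \<inter> {i\<in>I. w \<in> B i} \<noteq> {}"
      using bags_connected E by blast
  qed (rule bags_connected[OF w])
  moreover have "{i\<in>I. w \<in> B i} \<union> (\<Union>y\<in>{y. (y, w) \<in> E}. {i\<in>I. y \<in> B i})
      = {i\<in>I. w \<in> closed_nbhd V E (B i)}"
    using w unfolding closed_nbhd_def by blast
  ultimately show ?thesis by simp
qed

definition ord_convex :: "nat set \<Rightarrow> bool" where
  "ord_convex S \<longleftrightarrow> (\<forall>i\<in>S. \<forall>k\<in>S. {i..k} \<subseteq> S)"

lemma ord_convex_iff: "ord_convex S \<longleftrightarrow> (\<forall>i j k. i \<le> j \<and> j \<le> k \<and> i \<in> S \<and> k \<in> S \<longrightarrow> j \<in> S)"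
  unfolding ord_convex_def by (auto simp: subset_iff)

lemma ord_convex_subsingleton: "(\<And>k k'. k \<in> S \<Longrightarrow> k' \<in> S \<Longrightarrow> k = k') \<Longrightarrow> ord_convex S"
  unfolding ord_convex_def by (metis atLeastAtMost_iff le_antisym subsetI)

lemma ord_convex_Union:
  assumes C: "ord_convex C"
    and T: "\<And>y. y \<in> Y \<Longrightarrow> ord_convex (T y) \<and> T y \<inter> C \<noteq> {}"
  shows "ord_convex (C \<union> (\<Union>y\<in>Y. T y))"
proof -
  let ?U = "C \<union> (\<Union>y\<in>Y. T y)"
  have piece: "\<exists>P m. ord_convex P \<and> P \<subseteq> ?U \<and> u \<in> P \<and> m \<in> P \<and> m \<in> C" if "u \<in> ?U" for u
    using that C T by blast
  show ?thesis unfolding ord_convex_def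
  proof (intro ballI subsetI)
    fix i k j assume "i \<in> ?U" "k \<in> ?U" "j \<in> {i..k}"
    then obtain P1 m1 P2 m2 where
      P1: "ord_convex P1" "P1 \<subseteq> ?U" "i \<in> P1" "m1 \<in> P1" "m1 \<in> C" and
      P2: "ord_convex P2" "P2 \<subseteq> ?U" "k \<in> P2" "m2 \<in> P2" "m2 \<in> C" and j: "i \<le> j" "j \<le> k"
      using piece by (metis atLeastAtMost_iff)
    consider "j \<le> m1" | "m2 \<le> j" | "m1 \<le> j" "j \<le> m2" by linarith
    then have "j \<in> P1 \<or> j \<in> P2 \<or> j \<in> C"
    proof cases
      case 1
      then have "j \<in> {i..m1}" using j by simp
      then show ?thesis using P1(1,3,4) unfolding ord_convex_def by blast
    next
      case 2
      then have "j \<in> {m2..k}" using j by simp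
      then show ?thesis using P2(1,3,4) unfolding ord_convex_def by blast
    next
      case 3
      then have "j \<in> {m1..m2}" by simp
      then show ?thesis using C P1(5) P2(5) unfolding ord_convex_def by blast
    qed
    then show "j \<in> ?U" using P1(2) P2(2) by blast
  qed
qed

lemma path_decomp_iff_ord_convex:
  "path_decomp V E Bs \<longleftrightarrow> Bs \<noteq> [] \<and> (\<forall>b\<in>set Bs. b \<subseteq> V) \<and>
     (\<forall>v\<in>V. \<exists>b\<in>set Bs. v \<in> b) \<and> (\<forall>(u, v)\<in>E. \<exists>b\<in>set Bs. u \<in> b \<and> v \<in> b) \<and>
     (\<forall>v. ord_convex {k. k < length Bs \<and> v \<in> Bs ! k})"
proof -
  have "(\<forall>v i j k. i \<le> j \<and> j \<le> k \<and> k < length Bs \<and> v \<in> Bs ! i \<and> v \<in> Bs ! k \<longrightarrow> v \<in> Bs ! j)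
      \<longleftrightarrow> (\<forall>v. ord_convex {k. k < length Bs \<and> v \<in> Bs ! k})"
    unfolding ord_convex_iff mem_Collect_eq by (meson le_less_trans)
  then show ?thesis unfolding path_decomp_def by simp
qed

lemma path_decomp_closed_nbhd_ord_convex:
  assumes pd: "path_decomp V E Bs" and E: "E \<subseteq> V \<times> V" and w: "w \<in> V"
  shows "ord_convex {j. j < length Bs \<and> w \<in> closed_nbhd V E (Bs ! j)}"
proof -
  have convex: "ord_convex {j. j < length Bs \<and> v \<in> Bs ! j}" for v
    using pd unfolding path_decomp_iff_ord_convex by blast
  have "ord_convex ({j. j < length Bs \<and> w \<in> Bs ! j} \<union>
      (\<Union>y\<in>{y. (y, w) \<in> E}. {j. j < length Bs \<and> y \<in> Bs ! j}))"
  proof (rule ord_convex_Union[OF convex])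
    fix y assume "y \<in> {y. (y, w) \<in> E}"
    then obtain b where "b \<in> set Bs" "y \<in> b" "w \<in> b"
      using pd unfolding path_decomp_def by blast
    then show "ord_convex {j. j < length Bs \<and> y \<in> Bs ! j} \<and>
        {j. j < length Bs \<and> y \<in> Bs ! j} \<inter> {j. j < length Bs \<and> w \<in> Bs ! j} \<noteq> {}"
      using convex by (auto simp: in_set_conv_nth)
  qed
  moreover have "{j. j < length Bs \<and> w \<in> Bs ! j} \<union>
      (\<Union>y\<in>{y. (y, w) \<in> E}. {j. j < length Bs \<and> y \<in> Bs ! j})
      = {j. j < length Bs \<and> w \<in> closed_nbhd V E (Bs ! j)}"
    using w E unfolding closed_nbhd_def by blast
  ultimately show ?thesis by simp
qed

lemma ex_min_vertex_cover:
  "\<exists>A. A \<subseteq> V \<and> card A = vertex_cover_number V E \<and> (\<forall>u\<in>V - A. \<forall>v\<in>V - A. (u, v) \<notin> E)"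
  unfolding vertex_cover_number_def by (rule LeastI_ex) blast

lemma tree_decomp_single_bag: "graph V E \<Longrightarrow> tree_decomp V E {0} {} (\<lambda>_. V)"
  unfolding tree_decomp_def is_tree_def graph_def connected_def is_cycle_def sym_def irrefl_def
  by auto

lemma ex_tree_decomp_treewidth:
  assumes "graph V E"
  shows "\<exists>I F B. tree_decomp V E I F B \<and> (\<forall>i\<in>I. card (B i) \<le> treewidth V E + 1)"
proof -
  have "\<exists>I F B. tree_decomp V E I F B \<and> treewidth V E = Max (card ` B ` I) - 1"
    unfolding treewidth_def by (rule LeastI_ex) (use tree_decomp_single_bag[OF assms] in blast)
  then obtain I F B where td: "tree_decomp V E I F B" and tw: "treewidth V E = Max (card ` B ` I) - 1"
    by blast
  have "finite I" using td unfolding tree_decomp_def is_tree_def graph_def by simp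
  have "card (B i) \<le> treewidth V E + 1" if "i \<in> I" for i
  proof -
    have "card (B i) \<le> Max (card ` B ` I)" using \<open>finite I\<close> that by (intro Max_ge) auto
    then show ?thesis unfolding tw by linarith
  qed
  with td show ?thesis by blast
qed

lemma treewidth_le:
  assumes td: "tree_decomp V E I F B" and small: "\<forall>i\<in>I. card (B i) \<le> k + 1"
  shows "treewidth V E \<le> k"
proof -
  have "finite I" "I \<noteq> {}"
    using td unfolding tree_decomp_def is_tree_def graph_def connected_def by auto
  then have "Max (card ` B ` I) \<le> k + 1" using small by (simp add: Max.boundedI)
  moreover have "treewidth V E \<le> Max (card ` B ` I) - 1"
    unfolding treewidth_def by (rule Least_le) (use td in blast)
  ultimately show ?thesis by linarith
qed

lemma path_decomp_single_bag: "graph V E \<Longrightarrow> path_decomp V E [V]"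
  unfolding path_decomp_def graph_def by auto

lemma ex_path_decomp_pathwidth:
  assumes "graph V E"
  shows "\<exists>Bs. path_decomp V E Bs \<and> (\<forall>b\<in>set Bs. card b \<le> pathwidth V E + 1)"
proof -
  have "\<exists>Bs. path_decomp V E Bs \<and> pathwidth V E = Max (card ` set Bs) - 1"
    unfolding pathwidth_def by (rule LeastI_ex) (use path_decomp_single_bag[OF assms] in blast)
  then obtain Bs where pd: "path_decomp V E Bs" and pw: "pathwidth V E = Max (card ` set Bs) - 1"
    by blast
  have "card b \<le> pathwidth V E + 1" if "b \<in> set Bs" for b
  proof -
    have "card b \<le> Max (card ` set Bs)" using that by (intro Max_ge) auto
    then show ?thesis unfolding pw by linarith
  qed
  with pd show ?thesis by blast
qed

lemma pathwidth_le:
  assumes pd: "path_decomp V E Bs" and small: "\<forall>b\<in>set Bs. card b \<le> k + 1"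
  shows "pathwidth V E \<le> k"
proof -
  have "set Bs \<noteq> {}" using pd unfolding path_decomp_def by simp
  then have "Max (card ` set Bs) \<le> k + 1" using small by (simp add: Max.boundedI)
  moreover have "pathwidth V E \<le> Max (card ` set Bs) - 1"
    unfolding pathwidth_def by (rule Least_le) (use pd in blast)
  ultimately show ?thesis by linarith
qed

locale vertex_cover_product =
  fixes V1 :: "'a set" and E1 :: "('a \<times> 'a) set" and V2 :: "'b set" and E2 :: "('b \<times> 'b) set"
    and A :: "'a set"
  assumes graph1: "graph V1 E1" and graph2: "graph V2 E2"
    and cover_subset: "A \<subseteq> V1" and cover: "\<forall>u\<in>V1 - A. \<forall>v\<in>V1 - A. (u, v) \<notin> E1"
begin

definition cover_bag :: "'b set \<Rightarrow> ('a \<times> 'b) set" where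
  "cover_bag X = A \<times> closed_nbhd V2 E2 X"

lemma mem_cover_bag: "a \<in> A \<Longrightarrow> (a, w) \<in> cover_bag X \<longleftrightarrow> w \<in> closed_nbhd V2 E2 X"
  by (simp add: cover_bag_def)

lemma cover_bag_subset: "cover_bag X \<subseteq> V1 \<times> V2"
  using cover_subset unfolding cover_bag_def closed_nbhd_def by auto

lemma card_le_insert_cover_bag:
  assumes "D \<subseteq> insert x (cover_bag X)" "X \<subseteq> V2" "card X \<le> K"
  shows "card D \<le> card A * K * (max_degree V2 E2 + 1) + 1"
proof -
  have "finite (cover_bag X)"
    using cover_bag_subset graph1 graph2 unfolding graph_def by (meson finite_SigmaI finite_subset)
  then have "card D \<le> card (insert x (cover_bag X))"
    using assms(1) by (intro card_mono) auto
  also have "\<dots> \<le> card A * card (closed_nbhd V2 E2 X) + 1"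
    using \<open>finite (cover_bag X)\<close> by (simp add: card_insert_if cover_bag_def card_cartesian_product)
  also have "\<dots> \<le> card A * (card X * (max_degree V2 E2 + 1)) + 1"
    using card_closed_nbhd_le[OF graph2 assms(2)] by simp
  also have "\<dots> \<le> card A * (K * (max_degree V2 E2 + 1)) + 1"
    using assms(3) by (intro add_right_mono mult_le_mono2 mult_le_mono1)
  finally show ?thesis by (simp only: mult.assoc)
qed

lemma private_bag_covers_edge:
  assumes private_bags: "\<And>x. x \<in> (V1 - A) \<times> V2 \<Longrightarrow>
        \<exists>j\<in>J. \<exists>i. snd x \<in> B i \<and> insert x (cover_bag (B i)) \<subseteq> D j"
    and "a \<in> V1 - A" "b \<in> A" "(v, u) \<in> E2"
  shows "\<exists>j\<in>J. (a, v) \<in> D j \<and> (b, u) \<in> D j"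
proof -
  have E2: "E2 \<subseteq> V2 \<times> V2" using graph2 unfolding graph_def by simp
  then have "(a, v) \<in> (V1 - A) \<times> V2" using assms(2,4) by auto
  from private_bags[OF this] obtain j i
    where "j \<in> J" "v \<in> B i" "insert (a, v) (cover_bag (B i)) \<subseteq> D j" by auto
  moreover have "(b, u) \<in> cover_bag (B i)"
    using assms(3,4) E2 \<open>v \<in> B i\<close> by (auto simp: mem_cover_bag closed_nbhd_def)
  ultimately show ?thesis by blast
qed

lemma covers_direct_product:
  assumes vertices: "\<forall>v\<in>V2. \<exists>i\<in>I. v \<in> B i"
    and edges: "\<forall>(u, v)\<in>E2. \<exists>i\<in>I. u \<in> B i \<and> v \<in> B i"
    and cover_bags: "\<And>i. i \<in> I \<Longrightarrow> \<exists>j\<in>J. cover_bag (B i) \<subseteq> D j"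
    and private_bags: "\<And>x. x \<in> (V1 - A) \<times> V2 \<Longrightarrow>
        \<exists>j\<in>J. \<exists>i. snd x \<in> B i \<and> insert x (cover_bag (B i)) \<subseteq> D j"
  shows "(\<forall>v\<in>V1 \<times> V2. \<exists>j\<in>J. v \<in> D j)
    \<and> (\<forall>(u, v)\<in>direct_prod_edges E1 E2. \<exists>j\<in>J. u \<in> D j \<and> v \<in> D j)"
proof (intro conjI ballI; clarify)
  fix a w assume "a \<in> V1" "w \<in> V2"
  show "\<exists>j\<in>J. (a, w) \<in> D j"
  proof (cases "a \<in> A")
    case True
    obtain i where "i \<in> I" "w \<in> B i" using vertices \<open>w \<in> V2\<close> by blast
    moreover have "(a, w) \<in> cover_bag (B i)"
      using True \<open>w \<in> V2\<close> \<open>w \<in> B i\<close> by (auto simp: mem_cover_bag closed_nbhd_def)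
    ultimately show ?thesis using cover_bags by blast
  next
    case False
    then show ?thesis using private_bags[of "(a, w)"] \<open>a \<in> V1\<close> \<open>w \<in> V2\<close> by auto
  qed
next
  have E2: "E2 \<subseteq> V2 \<times> V2" "sym E2" and E1: "E1 \<subseteq> V1 \<times> V1"
    using graph1 graph2 unfolding graph_def by auto
  note private_edge = private_bag_covers_edge[OF private_bags]
  fix a v b u assume "((a, v), (b, u)) \<in> direct_prod_edges E1 E2"
  then have ab: "(a, b) \<in> E1" and vu: "(v, u) \<in> E2" by (auto simp: direct_prod_edges_def)
  have "a \<in> V1" "b \<in> V1" using ab E1 by auto
  consider "a \<in> A" "b \<in> A" | "a \<in> A" "b \<notin> A" | "a \<notin> A" by blast
  then show "\<exists>j\<in>J. (a, v) \<in> D j \<and> (b, u) \<in> D j"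
  proof cases
    assume "a \<in> A" "b \<in> A"
    obtain i where "i \<in> I" "v \<in> B i" "u \<in> B i" using edges vu by blast
    moreover have "(a, v) \<in> cover_bag (B i)" "(b, u) \<in> cover_bag (B i)"
      using \<open>a \<in> A\<close> \<open>b \<in> A\<close> vu E2(1) \<open>v \<in> B i\<close> \<open>u \<in> B i\<close>
      by (auto simp: mem_cover_bag closed_nbhd_def)
    ultimately show ?thesis using cover_bags by blast
  next
    assume "a \<in> A" "b \<notin> A"
    moreover have "(u, v) \<in> E2" using vu E2(2) by (simp add: sym_def)
    ultimately show ?thesis using private_edge[of b a u v] \<open>b \<in> V1\<close> by blast
  next
    assume "a \<notin> A"
    then have "b \<in> A" using cover ab \<open>a \<in> V1\<close> \<open>b \<in> V1\<close> by blast
    then show ?thesis using private_edge[of a b v u] \<open>a \<in> V1\<close> \<open>a \<notin> A\<close> vu by blast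
  qed
qed

end

locale tree_product = vertex_cover_product +
  fixes I :: "nat set" and F :: "(nat \<times> nat) set" and B :: "nat \<Rightarrow> 'b set"
    and S :: "nat set" and vertex_at :: "nat \<Rightarrow> 'a \<times> 'b" and parent :: "'a \<times> 'b \<Rightarrow> nat"
  assumes tree_decomp: "tree_decomp V2 E2 I F B"
    and fresh: "S \<inter> I = {}"
    and leaf_bij: "bij_betw vertex_at S ((V1 - A) \<times> V2)"
    and parent: "\<And>x. x \<in> (V1 - A) \<times> V2 \<Longrightarrow> parent x \<in> I \<and> snd x \<in> B (parent x)"
begin

definition leaf_edges :: "(nat \<times> nat) set" where
  "leaf_edges = (\<lambda>s. (s, parent (vertex_at s))) ` S \<union> (\<lambda>s. (parent (vertex_at s), s)) ` S"

definition product_bag :: "nat \<Rightarrow> ('a \<times> 'b) set" where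
  "product_bag j = (if j \<in> I then cover_bag (B j)
     else insert (vertex_at j) (cover_bag (B (parent (vertex_at j)))))"

lemma leaf_parent: "s \<in> S \<Longrightarrow> vertex_at s \<in> (V1 - A) \<times> V2 \<and> parent (vertex_at s) \<in> I"
  using bij_betw_apply[OF leaf_bij] parent by blast

lemma leaf_exists: "x \<in> (V1 - A) \<times> V2 \<Longrightarrow> \<exists>s\<in>S. vertex_at s = x"
  using bij_betw_imp_surj_on[OF leaf_bij] by (metis imageE)

lemma is_tree_with_leaves: "is_tree (I \<union> S) (F \<union> leaf_edges)"
proof -
  have "finite ((V1 - A) \<times> V2)" using graph1 graph2 unfolding graph_def by simp
  then have "finite S" using bij_betw_finite[OF leaf_bij] by simp
  moreover have "is_tree I F" using tree_decomp unfolding tree_decomp_def by simp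
  moreover have "(\<lambda>s. parent (vertex_at s)) ` S \<subseteq> I" using leaf_parent by auto
  ultimately show ?thesis
    unfolding leaf_edges_def Un_assoc[symmetric] using is_tree_add_leaves fresh by blast
qed

lemma product_bags_cover:
  "(\<forall>v\<in>V1 \<times> V2. \<exists>j\<in>I \<union> S. v \<in> product_bag j)
    \<and> (\<forall>(u, v)\<in>direct_prod_edges E1 E2. \<exists>j\<in>I \<union> S. u \<in> product_bag j \<and> v \<in> product_bag j)"
proof (rule covers_direct_product)
  show "\<forall>v\<in>V2. \<exists>i\<in>I. v \<in> B i" "\<forall>(u, v)\<in>E2. \<exists>i\<in>I. u \<in> B i \<and> v \<in> B i"
    using tree_decomp unfolding tree_decomp_def by simp_all
  show "\<exists>j\<in>I \<union> S. cover_bag (B i) \<subseteq> product_bag j" if "i \<in> I" for i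
    using that unfolding product_bag_def by auto
next
  fix x assume x: "x \<in> (V1 - A) \<times> V2"
  then obtain s where s: "s \<in> S" "vertex_at s = x" using leaf_exists by blast
  then have "product_bag s = insert x (cover_bag (B (parent x)))"
    using fresh unfolding product_bag_def by auto
  then show "\<exists>j\<in>I \<union> S. \<exists>i. snd x \<in> B i \<and> insert x (cover_bag (B i)) \<subseteq> product_bag j"
    using s parent[OF x] by blast
qed

lemma product_bags_connected:
  assumes x: "x \<in> V1 \<times> V2"
  shows "connected {j\<in>I \<union> S. x \<in> product_bag j} (F \<union> leaf_edges)"
proof (cases "x \<in> (V1 - A) \<times> V2")
  case True
  then obtain s where s: "s \<in> S" "vertex_at s = x" using leaf_exists by blast
  have not_cover: "x \<notin> cover_bag Y" for Y using True unfolding cover_bag_def by auto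
  have unique: "s' = s" if "s' \<in> S" "vertex_at s' = x" for s'
    using bij_betw_imp_inj_on[OF leaf_bij] s that by (auto dest: inj_onD)
  have "x \<in> product_bag j \<longleftrightarrow> j = s" if "j \<in> I \<union> S" for j
  proof (cases "j \<in> I")
    case True
    then show ?thesis using not_cover s(1) fresh unfolding product_bag_def by auto
  next
    case False
    then have "x \<in> product_bag j \<longleftrightarrow> x = vertex_at j"
      using not_cover unfolding product_bag_def by simp
    also have "\<dots> \<longleftrightarrow> j = s" using that False unique s(2) by blast
    finally show ?thesis .
  qed
  then have "{j\<in>I \<union> S. x \<in> product_bag j} = {s}" using s(1) by blast
  then show ?thesis by (simp add: connected_singleton)
next
  case False
  then obtain a w where x_def: "x = (a, w)" "a \<in> A" "w \<in> V2" using x by auto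
  let ?J = "{i\<in>I. w \<in> closed_nbhd V2 E2 (B i)}"
  have "x \<noteq> vertex_at s" if "s \<in> S" for s using leaf_parent[OF that] x_def by auto
  then have eq: "{j\<in>I \<union> S. x \<in> product_bag j} = ?J \<union> {s\<in>S. parent (vertex_at s) \<in> ?J}"
    using fresh leaf_parent x_def unfolding product_bag_def by (auto simp: mem_cover_bag)
  have "E2 \<subseteq> V2 \<times> V2" using graph2 unfolding graph_def by simp
  then have "connected ?J F"
    using tree_decomp_closed_nbhd_connected[OF tree_decomp] \<open>w \<in> V2\<close> by blast
  then show ?thesis unfolding eq leaf_edges_def Un_assoc[symmetric] by (rule connected_add_leaves)
qed

lemma tree_decomp_product_bags:
  "tree_decomp (V1 \<times> V2) (direct_prod_edges E1 E2) (I \<union> S) (F \<union> leaf_edges) product_bag"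
proof -
  have "product_bag j \<subseteq> V1 \<times> V2" if "j \<in> I \<union> S" for j
  proof (cases "j \<in> I")
    case False
    then have "vertex_at j \<in> (V1 - A) \<times> V2" using that leaf_parent by simp
    then have "vertex_at j \<in> V1 \<times> V2" by auto
    then show ?thesis using cover_bag_subset False unfolding product_bag_def by simp
  qed (simp add: product_bag_def cover_bag_subset)
  then show ?thesis
    unfolding tree_decomp_def connected_restrict
    using is_tree_with_leaves product_bags_cover product_bags_connected by blast
qed

end

locale path_product = vertex_cover_product +
  fixes Bs :: "'b set list" and M :: nat
    and vertex_at :: "nat \<Rightarrow> 'a \<times> 'b" and parent :: "'a \<times> 'b \<Rightarrow> nat"
  assumes path_decomp: "path_decomp V2 E2 Bs" and M_pos: "0 < M"
    and slot_bij: "bij_betw vertex_at {1..<M} ((V1 - A) \<times> V2)"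
    and parent: "\<And>x. x \<in> (V1 - A) \<times> V2 \<Longrightarrow> parent x < length Bs \<and> snd x \<in> Bs ! parent x"
begin

text \<open>Slot k is position k mod M of block k div M. Every slot of block j holds the cover bag
  of Bs ! j; slot t > 0 also holds the private vertex vertex_at t if its parent is j.\<close>

definition slot_bag :: "nat \<Rightarrow> ('a \<times> 'b) set" where
  "slot_bag k = (if 0 < k mod M \<and> parent (vertex_at (k mod M)) = k div M
     then insert (vertex_at (k mod M)) (cover_bag (Bs ! (k div M)))
     else cover_bag (Bs ! (k div M)))"

abbreviation slots :: nat where
  "slots \<equiv> length Bs * M"

lemma slot_vertex: "0 < k mod M \<Longrightarrow> vertex_at (k mod M) \<in> (V1 - A) \<times> V2"
  using bij_betw_apply[OF slot_bij] M_pos by simp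

lemma slot_bag_subset: "slot_bag k \<subseteq> V1 \<times> V2"
proof -
  have "vertex_at (k mod M) \<in> V1 \<times> V2" if "0 < k mod M" using slot_vertex[OF that] by auto
  then show ?thesis using cover_bag_subset unfolding slot_bag_def by auto
qed

lemma slot_of_private:
  assumes x: "x \<in> (V1 - A) \<times> V2"
  shows "\<exists>k<slots. slot_bag k = insert x (cover_bag (Bs ! parent x))"
proof -
  obtain t where t: "t \<in> {1..<M}" "vertex_at t = x"
    using bij_betw_imp_surj_on[OF slot_bij] x by (metis imageE)
  define k where "k = t + parent x * M"
  have k: "k mod M = t" "k div M = parent x" using t(1) unfolding k_def by simp_all
  have "k < Suc (parent x) * M" using t(1) unfolding k_def by simp
  also have "\<dots> \<le> slots" using parent[OF x] by (intro mult_le_mono1) simp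
  finally have "k < slots" .
  then show ?thesis using k t unfolding slot_bag_def by auto
qed

lemma private_in_slot_bag:
  assumes "x \<in> (V1 - A) \<times> V2" "x \<in> slot_bag k"
  shows "0 < k mod M \<and> vertex_at (k mod M) = x \<and> k div M = parent x"
proof -
  have "x \<notin> cover_bag (Bs ! (k div M))" using assms(1) unfolding cover_bag_def by auto
  then show ?thesis using assms(2) unfolding slot_bag_def by (auto split: if_splits)
qed

lemma private_slot_unique:
  assumes "x \<in> (V1 - A) \<times> V2" "x \<in> slot_bag k" "x \<in> slot_bag k'"
  shows "k = k'"
proof -
  note k = private_in_slot_bag[OF assms(1,2)] and k' = private_in_slot_bag[OF assms(1,3)]
  have "k mod M < M" "k' mod M < M" using M_pos by simp_all
  then have "k mod M = k' mod M"
    using k k' inj_onD[OF bij_betw_imp_inj_on[OF slot_bij]] by simp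
  then have "k div M * M + k mod M = k' div M * M + k' mod M" using k k' by simp
  then show ?thesis by simp
qed

lemma slot_bags_cover:
  "(\<forall>v\<in>V1 \<times> V2. \<exists>k\<in>{..<slots}. v \<in> slot_bag k)
    \<and> (\<forall>(u, v)\<in>direct_prod_edges E1 E2. \<exists>k\<in>{..<slots}. u \<in> slot_bag k \<and> v \<in> slot_bag k)"
proof (rule covers_direct_product)
  have "\<forall>v\<in>V2. \<exists>b\<in>set Bs. v \<in> b" "\<forall>(u, v)\<in>E2. \<exists>b\<in>set Bs. u \<in> b \<and> v \<in> b"
    using path_decomp unfolding path_decomp_def by simp_all
  then show "\<forall>v\<in>V2. \<exists>j\<in>{..<length Bs}. v \<in> Bs ! j"
    "\<forall>(u, v)\<in>E2. \<exists>j\<in>{..<length Bs}. u \<in> Bs ! j \<and> v \<in> Bs ! j"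
    by (fastforce simp: in_set_conv_nth)+
next
  fix j assume "j \<in> {..<length Bs}"
  then have "j * M < slots" using M_pos by simp
  moreover have "slot_bag (j * M) = cover_bag (Bs ! j)" unfolding slot_bag_def using M_pos by simp
  ultimately show "\<exists>k\<in>{..<slots}. cover_bag (Bs ! j) \<subseteq> slot_bag k" by auto
next
  fix x assume x: "x \<in> (V1 - A) \<times> V2"
  then show "\<exists>k\<in>{..<slots}. \<exists>j. snd x \<in> Bs ! j \<and> insert x (cover_bag (Bs ! j)) \<subseteq> slot_bag k"
    using slot_of_private[OF x] parent[OF x] by auto
qed

lemma slot_bags_ord_convex: "ord_convex {k. k < slots \<and> x \<in> slot_bag k}"
proof (cases "x \<in> A \<times> V2")
  case True
  then obtain a w where x_def: "x = (a, w)" "a \<in> A" "w \<in> V2" by auto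
  let ?J = "{j. j < length Bs \<and> w \<in> closed_nbhd V2 E2 (Bs ! j)}"
  have "x \<noteq> vertex_at (k mod M)" if "0 < k mod M" for k
    using slot_vertex[OF that] x_def by auto
  moreover have "k div M < length Bs" if "k < slots" for k
    using that by (simp add: less_mult_imp_div_less)
  ultimately have eq: "{k. k < slots \<and> x \<in> slot_bag k} = {k. k < slots \<and> k div M \<in> ?J}"
    using x_def unfolding slot_bag_def by (auto simp: mem_cover_bag)
  have "E2 \<subseteq> V2 \<times> V2" using graph2 unfolding graph_def by simp
  then have "ord_convex ?J"
    using path_decomp_closed_nbhd_ord_convex[OF path_decomp] \<open>w \<in> V2\<close> by blast
  then show ?thesis
    unfolding eq ord_convex_iff mem_Collect_eq by (meson div_le_mono le_less_trans)
next
  case False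
  then have "x \<in> (V1 - A) \<times> V2" if "x \<in> slot_bag k" for k
    using slot_bag_subset that by auto
  then show ?thesis using private_slot_unique by (intro ord_convex_subsingleton) blast
qed

lemma path_decomp_slot_bags:
  "path_decomp (V1 \<times> V2) (direct_prod_edges E1 E2) (map slot_bag [0..<slots])"
proof -
  have "length Bs > 0" using path_decomp unfolding path_decomp_def by simp
  moreover have "set (map slot_bag [0..<slots]) = slot_bag ` {..<slots}" by auto
  moreover have "{k. k < length (map slot_bag [0..<slots]) \<and> x \<in> map slot_bag [0..<slots] ! k}
      = {k. k < slots \<and> x \<in> slot_bag k}" for x
    by auto
  ultimately show ?thesis
    unfolding path_decomp_iff_ord_convex
    using M_pos slot_bag_subset slot_bags_cover slot_bags_ord_convex by auto
qed

end

context vertex_cover_product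
begin

lemma tree_decomp_product:
  assumes td: "tree_decomp V2 E2 I F B" and small: "\<forall>i\<in>I. card (B i) \<le> K"
  shows "\<exists>I' F' B'. tree_decomp (V1 \<times> V2) (direct_prod_edges E1 E2) I' F' B'
    \<and> (\<forall>j\<in>I'. card (B' j) \<le> card A * K * (max_degree V2 E2 + 1) + 1)"
proof -
  let ?X = "(V1 - A) \<times> V2"
  define parent where "parent x = (SOME i. i \<in> I \<and> snd x \<in> B i)" for x :: "'a \<times> 'b"
  have parent: "parent x \<in> I \<and> snd x \<in> B (parent x)" if "x \<in> ?X" for x
  proof -
    have "\<exists>i. i \<in> I \<and> snd x \<in> B i" using td that unfolding tree_decomp_def by auto
    then show ?thesis unfolding parent_def by (rule someI_ex)
  qed
  have "finite I" "finite ?X" using td graph1 graph2 unfolding tree_decomp_def is_tree_def graph_def by auto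
  define S where "S = {Suc (Max I)..<Suc (Max I) + card ?X}"
  have fresh: "S \<inter> I = {}" using \<open>finite I\<close> unfolding S_def by (auto dest: Max_ge)
  have "finite S" "card S = card ?X" unfolding S_def by simp_all
  then obtain vertex_at where "bij_betw vertex_at S ?X"
    using finite_same_card_bij \<open>finite ?X\<close> by blast
  then interpret tree_product V1 E1 V2 E2 A I F B S vertex_at parent
    using td fresh parent by unfold_locales
  have "card (product_bag j) \<le> card A * K * (max_degree V2 E2 + 1) + 1" if "j \<in> I \<union> S" for j
  proof -
    let ?i = "if j \<in> I then j else parent (vertex_at j)"
    have "?i \<in> I" using that leaf_parent by auto
    moreover have "product_bag j \<subseteq> insert (vertex_at j) (cover_bag (B ?i))"
      unfolding product_bag_def by auto
    ultimately show ?thesis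
      using td small by (intro card_le_insert_cover_bag) (auto simp: tree_decomp_def)
  qed
  then show ?thesis using tree_decomp_product_bags by blast
qed

lemma path_decomp_product:
  assumes pd: "path_decomp V2 E2 Bs" and small: "\<forall>b\<in>set Bs. card b \<le> K"
  shows "\<exists>Bs'. path_decomp (V1 \<times> V2) (direct_prod_edges E1 E2) Bs'
    \<and> (\<forall>b\<in>set Bs'. card b \<le> card A * K * (max_degree V2 E2 + 1) + 1)"
proof -
  let ?X = "(V1 - A) \<times> V2"
  define parent where "parent x = (SOME j. j < length Bs \<and> snd x \<in> Bs ! j)" for x :: "'a \<times> 'b"
  have parent: "parent x < length Bs \<and> snd x \<in> Bs ! parent x" if "x \<in> ?X" for x
  proof -
    have "\<exists>b\<in>set Bs. snd x \<in> b" using pd that unfolding path_decomp_def by auto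
    then have "\<exists>j. j < length Bs \<and> snd x \<in> Bs ! j" by (metis in_set_conv_nth)
    then show ?thesis unfolding parent_def by (rule someI_ex)
  qed
  have "finite ?X" using graph1 graph2 unfolding graph_def by simp
  moreover have "card {1..<Suc (card ?X)} = card ?X" by simp
  ultimately obtain vertex_at where "bij_betw vertex_at {1..<Suc (card ?X)} ?X"
    using finite_same_card_bij by (metis finite_atLeastLessThan)
  then interpret path_product V1 E1 V2 E2 A Bs "Suc (card ?X)" vertex_at parent
    using pd parent by unfold_locales simp_all
  have "card (slot_bag k) \<le> card A * K * (max_degree V2 E2 + 1) + 1" if "k < slots" for k
  proof (rule card_le_insert_cover_bag)
    show "slot_bag k \<subseteq> insert (vertex_at (k mod Suc (card ?X))) (cover_bag (Bs ! (k div Suc (card ?X))))"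
      unfolding slot_bag_def by auto
    have "k div Suc (card ?X) < length Bs" using that by (simp add: less_mult_imp_div_less)
    then show "Bs ! (k div Suc (card ?X)) \<subseteq> V2" "card (Bs ! (k div Suc (card ?X))) \<le> K"
      using pd small unfolding path_decomp_def by auto
  qed
  then show ?thesis
    using path_decomp_slot_bags by (intro exI[of _ "map slot_bag [0..<slots]"]) auto
qed

lemma treewidth_direct_product_le:
  "treewidth (V1 \<times> V2) (direct_prod_edges E1 E2)
    \<le> card A * (treewidth V2 E2 + 1) * (max_degree V2 E2 + 1)"
proof -
  obtain I F B where td: "tree_decomp V2 E2 I F B"
    and small: "\<forall>i\<in>I. card (B i) \<le> treewidth V2 E2 + 1"
    using ex_tree_decomp_treewidth[OF graph2] by blast
  obtain I' F' B' where "tree_decomp (V1 \<times> V2) (direct_prod_edges E1 E2) I' F' B'"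
    "\<forall>j\<in>I'. card (B' j) \<le> card A * (treewidth V2 E2 + 1) * (max_degree V2 E2 + 1) + 1"
    using tree_decomp_product[OF td small] by blast
  then show ?thesis by (rule treewidth_le)
qed

lemma pathwidth_direct_product_le:
  "pathwidth (V1 \<times> V2) (direct_prod_edges E1 E2)
    \<le> card A * (pathwidth V2 E2 + 1) * (max_degree V2 E2 + 1)"
proof -
  obtain Bs where pd: "path_decomp V2 E2 Bs"
    and small: "\<forall>b\<in>set Bs. card b \<le> pathwidth V2 E2 + 1"
    using ex_path_decomp_pathwidth[OF graph2] by blast
  obtain Bs' where "path_decomp (V1 \<times> V2) (direct_prod_edges E1 E2) Bs'"
    "\<forall>b\<in>set Bs'. card b \<le> card A * (pathwidth V2 E2 + 1) * (max_degree V2 E2 + 1) + 1"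
    using path_decomp_product[OF pd small] by blast
  then show ?thesis by (rule pathwidth_le)
qed

end

theorem mainTheorem18:
  fixes V1 :: "'a set" and E1 :: "('a \<times> 'a) set"
    and V2 :: "'b set" and E2 :: "('b \<times> 'b) set"
  assumes "graph V1 E1" and "connected V1 E1"
    and "graph V2 E2" and "connected V2 E2"
  shows "treewidth (V1 \<times> V2) (direct_prod_edges E1 E2)
           \<le> vertex_cover_number V1 E1 * (treewidth V2 E2 + 1) * (max_degree V2 E2 + 1)
       \<and> pathwidth (V1 \<times> V2) (direct_prod_edges E1 E2)
           \<le> vertex_cover_number V1 E1 * (pathwidth V2 E2 + 1) * (max_degree V2 E2 + 1)"
proof -
  obtain A where A: "A \<subseteq> V1" "card A = vertex_cover_number V1 E1"
    "\<forall>u\<in>V1 - A. \<forall>v\<in>V1 - A. (u, v) \<notin> E1"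
    using ex_min_vertex_cover[of V1 E1] by blast
  interpret vertex_cover_product V1 E1 V2 E2 A
    using assms(1,3) A(1,3) by unfold_locales
  show ?thesis
    using treewidth_direct_product_le pathwidth_direct_product_le unfolding A(2) by simp
qed

end
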